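(* Let $G$ be a bipartite graph with $n\ge 2$ vertices, $m\ge 1$ edges and minimum degree $\delta$. Then $$EE(G) \ge 2\cosh\left(\frac{2(m-\delta)}{n-1}\right) + (n-2),$$ with equality if and only if $n=2p+1$ and $G\cong K_{p,p}\cup K_1$.
   Context: All graphs are finite, simple and undirected. For a graph $G$ with adjacency matrix $A(G)$ having eigenvalues $\lambda_1\ge\cdots\ge\lambda_n$, the Estrada index is $EE(G)=\sum_{i=1}^n e^{\lambda_i}$. $K_{p,p}$ is the complete bipartite graph with both parts of size $p$; $K_{p,p}\cup K_1$ is its disjoint union with one isolated vertex. *)

theory Defs
  imports Complex_Main "Jordan_Normal_Form.Char_Poly"
begin

definition simple_graph :: "nat \<Rightarrow> (nat \<Rightarrow> nat \<Rightarrow> bool) \<Rightarrow> bool" where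
  "simple_graph n E \<longleftrightarrow>
     (\<forall>i j. E i j \<longrightarrow> i < n \<and> j < n \<and> i \<noteq> j) \<and> (\<forall>i j. E i j \<longrightarrow> E j i)"

definition adj_matrix :: "nat \<Rightarrow> (nat \<Rightarrow> nat \<Rightarrow> bool) \<Rightarrow> real mat" where
  "adj_matrix n E = mat n n (\<lambda>(i, j). if E i j then 1 else 0)"

text \<open>The adjacency matrix is real symmetric, so all roots of its
  characteristic polynomial are real.\<close>
definition estrada_index :: "nat \<Rightarrow> (nat \<Rightarrow> nat \<Rightarrow> bool) \<Rightarrow> real" where
  "estrada_index n E =
     (let p = char_poly (adj_matrix n E) in
      \<Sum>x\<in>{x. poly p x = 0}. of_nat (order x p) * exp x)"

definition num_edges :: "nat \<Rightarrow> (nat \<Rightarrow> nat \<Rightarrow> bool) \<Rightarrow> nat" where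
  "num_edges n E = card {(i, j). i < j \<and> j < n \<and> E i j}"

definition degree :: "nat \<Rightarrow> (nat \<Rightarrow> nat \<Rightarrow> bool) \<Rightarrow> nat \<Rightarrow> nat" where
  "degree n E i = card {j. j < n \<and> E i j}"

definition min_degree :: "nat \<Rightarrow> (nat \<Rightarrow> nat \<Rightarrow> bool) \<Rightarrow> nat" where
  "min_degree n E = Min (degree n E ` {0..<n})"

definition bipartite :: "nat \<Rightarrow> (nat \<Rightarrow> nat \<Rightarrow> bool) \<Rightarrow> bool" where
  "bipartite n E \<longleftrightarrow> (\<exists>X. X \<subseteq> {0..<n} \<and>
     (\<forall>i j. E i j \<longrightarrow> (i \<in> X \<longleftrightarrow> j \<notin> X)))"

definition graph_iso :: "nat \<Rightarrow> (nat \<Rightarrow> nat \<Rightarrow> bool) \<Rightarrow> nat \<Rightarrow> (nat \<Rightarrow> nat \<Rightarrow> bool) \<Rightarrow> bool" where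
  "graph_iso n E n' E' \<longleftrightarrow> (\<exists>f. bij_betw f {0..<n} {0..<n'} \<and>
     (\<forall>i<n. \<forall>j<n. E i j \<longleftrightarrow> E' (f i) (f j)))"

text \<open>K_{p,p} \<union> K_1 on vertices {0..<2p+1}: parts {0..<p} and {p..<2p}, vertex 2p isolated.\<close>
definition Kpp_K1 :: "nat \<Rightarrow> nat \<Rightarrow> nat \<Rightarrow> bool" where
  "Kpp_K1 p i j \<longleftrightarrow> (i < p \<and> p \<le> j \<and> j < 2 * p) \<or> (j < p \<and> p \<le> i \<and> i < 2 * p)"

end

theory Submission
  imports Defs "Jordan_Normal_Form.Schur_Decomposition"
begin

text \<open>
  The spectrum of a bipartite graph is symmetric about 0, so EE(G) is the sum of cosh over the
  eigenvalues. The largest eigenvalue \<rho> and its mirror image -\<rho> contribute 2 cosh \<rho>, and each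
  of the remaining n - 2 eigenvalues contributes at least cosh 0 = 1. For a vertex v of minimum
  degree, the Rayleigh quotient of the indicator vector of V - {v} is exactly
  t = 2(m - \<delta>)/(n - 1), hence t \<le> \<rho>; this gives the inequality.

  Equality forces \<rho> = t and all other eigenvalues to vanish, so 2m = \<Sum> \<lambda>^2 = 2t^2, and the
  Rayleigh quotient of the indicator vector is extremal, making it an eigenvector. Reading off
  its coordinates, v is isolated and every other vertex has degree t, so t(n - 1) = 2m = 2t^2
  and n = 2t + 1; a t-regular bipartite graph on 2t vertices is K_{t,t}.
\<close>

section \<open>Spectra of real symmetric matrices\<close>

lemma symmetric_mat_entry:
  assumes "A \<in> carrier_mat n n" "A\<^sup>T = A" "i < n" "j < n"
  shows "A $$ (i, j) = A $$ (j, i)"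
  by (metis assms carrier_matD index_transpose_mat(1))

lemma eigenvalue_real_symmetric_real:
  fixes A :: "real mat"
  assumes A: "A \<in> carrier_mat n n" and sym: "A\<^sup>T = A"
    and ev: "eigenvalue (map_mat complex_of_real A) k"
  shows "Im k = 0"
proof -
  let ?Ac = "map_mat complex_of_real A"
  from ev obtain v where v: "v \<in> carrier_vec n" "v \<noteq> 0\<^sub>v n" "?Ac *\<^sub>v v = k \<cdot>\<^sub>v v"
    unfolding eigenvalue_def eigenvector_def using A by auto
  have row: "(\<Sum>j<n. of_real (A $$ (i, j)) * v $ j) = k * v $ i" if "i < n" for i
  proof -
    have "(?Ac *\<^sub>v v) $ i = k * v $ i" using v that by (metis carrier_vecD index_smult_vec(1))
    moreover have "(?Ac *\<^sub>v v) $ i = (\<Sum>j<n. of_real (A $$ (i, j)) * v $ j)"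
      using A v(1) that by (auto simp: scalar_prod_def lessThan_atLeast0 intro!: sum.cong)
    ultimately show ?thesis by (simp cong: sum.cong)
  qed
  define S where "S = (\<Sum>i<n. \<Sum>j<n. cnj (v $ i) * of_real (A $$ (i, j)) * v $ j)"
  have S_eq: "S = k * of_real (\<Sum>i<n. (cmod (v $ i))\<^sup>2)"
  proof -
    have "S = (\<Sum>i<n. cnj (v $ i) * (\<Sum>j<n. of_real (A $$ (i, j)) * v $ j))"
      unfolding S_def by (simp add: sum_distrib_left mult.assoc)
    also have "\<dots> = (\<Sum>i<n. k * (cnj (v $ i) * v $ i))" using row by (simp add: algebra_simps)
    finally show ?thesis
      by (simp add: sum_distrib_left complex_norm_square mult.commute del: of_real_power)
  qed
  have "cnj S = (\<Sum>i<n. \<Sum>j<n. v $ i * of_real (A $$ (i, j)) * cnj (v $ j))"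
    unfolding S_def by (simp add: cnj_sum)
  also have "\<dots> = (\<Sum>j<n. \<Sum>i<n. v $ i * of_real (A $$ (i, j)) * cnj (v $ j))"
    by (rule sum.swap)
  also have "\<dots> = S" unfolding S_def
    by (intro sum.cong refl) (simp add: symmetric_mat_entry[OF A sym] mult.commute mult.left_commute)
  finally have "Im S = 0" by (metis Reals_cnj_iff complex_is_Real_iff)
  moreover obtain i where "i < n" "v $ i \<noteq> 0"
    using v(1,2) by (metis carrier_vecD eq_vecI index_zero_vec)
  then have "(\<Sum>i<n. (cmod (v $ i))\<^sup>2) > 0" by (intro sum_pos2[of _ i]) auto
  ultimately show ?thesis unfolding S_eq by simp
qed

interpretation of_real_poly_hom: map_poly_inj_idom_hom complex_of_real ..

lemma real_symmetric_char_poly_splits: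
  fixes A :: "real mat"
  assumes A: "A \<in> carrier_mat n n" and sym: "A\<^sup>T = A"
  obtains rs where "char_poly A = (\<Prod>r\<leftarrow>rs. [:- r, 1:])" "length rs = n"
proof -
  let ?Ac = "map_mat complex_of_real A"
  have Ac: "?Ac \<in> carrier_mat n n" using A by simp
  obtain cs where cs: "char_poly ?Ac = (\<Prod>c\<leftarrow>cs. [:- c, 1:])" "length cs = n"
    using char_poly_factorized[OF Ac] by blast
  have "Im c = 0" if "c \<in> set cs" for c
  proof -
    have "poly (char_poly ?Ac) c = 0" unfolding cs(1) using that by (rule linear_poly_root)
    then show ?thesis
      using eigenvalue_real_symmetric_real[OF A sym] eigenvalue_root_char_poly[OF Ac] by blast
  qed
  then have cs_real: "map (complex_of_real \<circ> Re) cs = cs" by (simp add: map_idI complex_eq_iff)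
  have "map_poly complex_of_real (char_poly A) = map_poly complex_of_real (\<Prod>r\<leftarrow>map Re cs. [:- r, 1:])"
    unfolding of_real_hom.char_poly_hom[OF A, symmetric] cs(1)
    by (subst cs_real[symmetric]) (simp add: of_real_poly_hom.hom_prod_list o_def)
  then have "char_poly A = (\<Prod>r\<leftarrow>map Re cs. [:- r, 1:])"
    by (rule of_real_poly_hom.injectivity)
  with cs(2) show thesis by (intro that[of "map Re cs"]) auto
qed

lemma index_mult_mat_sum:
  assumes "A \<in> carrier_mat n m" "B \<in> carrier_mat m k" "i < n" "j < k"
  shows "(A * B) $$ (i, j) = (\<Sum>l<m. A $$ (i, l) * B $$ (l, j))"
  using assms by (auto simp: scalar_prod_def lessThan_atLeast0 intro!: sum.cong)

lemma pow_mat_add: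
  fixes A :: "'a::semiring_1 mat"
  assumes A: "A \<in> carrier_mat n n"
  shows "A ^\<^sub>m (k + l) = A ^\<^sub>m k * A ^\<^sub>m l"
proof (induction l)
  case (Suc l)
  then show ?case using A by (simp add: assoc_mult_mat[of _ n n _ n _ n])
qed (use A in simp)

lemma transpose_pow_mat:
  fixes A :: "'a::comm_semiring_1 mat"
  assumes A: "A \<in> carrier_mat n n"
  shows "(A ^\<^sub>m k)\<^sup>T = A\<^sup>T ^\<^sub>m k"
proof (induction k)
  case (Suc k)
  have "(A ^\<^sub>m Suc k)\<^sup>T = (A * A ^\<^sub>m k)\<^sup>T"
    using pow_mat_add[OF A, of 1 k] A by simp
  also have "\<dots> = A\<^sup>T ^\<^sub>m k * A\<^sup>T"
    using A Suc by (simp add: transpose_mult[of _ n n _ n])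
  finally show ?case by simp
qed (use A in simp)

definition trace :: "'a::comm_monoid_add mat \<Rightarrow> 'a" where
  "trace A = (\<Sum>i<dim_row A. A $$ (i, i))"

lemma trace_eq_sum_list_diag_mat: "trace A = sum_list (diag_mat A)"
  unfolding trace_def diag_mat_def by (simp add: sum_list_distinct_conv_sum_set lessThan_atLeast0)

lemma trace_mult_comm:
  fixes A B :: "'a::comm_semiring_0 mat"
  assumes A: "A \<in> carrier_mat n m" and B: "B \<in> carrier_mat m n"
  shows "trace (A * B) = trace (B * A)"
proof -
  have "trace (A * B) = (\<Sum>i<n. (A * B) $$ (i, i))" using A by (simp add: trace_def)
  also have "\<dots> = (\<Sum>i<n. \<Sum>l<m. A $$ (i, l) * B $$ (l, i))"
    by (intro sum.cong refl index_mult_mat_sum[OF A B]) auto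
  also have "\<dots> = (\<Sum>l<m. \<Sum>i<n. B $$ (l, i) * A $$ (i, l))"
    by (subst sum.swap) (simp add: mult.commute)
  also have "\<dots> = (\<Sum>l<m. (B * A) $$ (l, l))"
    by (intro sum.cong refl index_mult_mat_sum[OF B A, symmetric]) auto
  also have "\<dots> = trace (B * A)" using B by (simp add: trace_def)
  finally show ?thesis .
qed

lemma upper_triangular_mult:
  fixes A B :: "'a::semiring_0 mat"
  assumes A: "A \<in> carrier_mat n n" "upper_triangular A"
    and B: "B \<in> carrier_mat n n" "upper_triangular B"
  shows "upper_triangular (A * B)" "diag_mat (A * B) = map2 (*) (diag_mat A) (diag_mat B)"
proof -
  have entry_product_zero: "A $$ (i, l) * B $$ (l, j) = 0" if "j < i \<or> (j = i \<and> l \<noteq> i)" "i < n" "l < n" for i j l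
    using A B that by (cases "l < i") (auto simp: upper_triangular_def)
  have "(A * B) $$ (i, j) = 0" if "j < i" "i < n" for i j
    using that by (simp add: index_mult_mat_sum[OF A(1) B(1)] entry_product_zero)
  then show "upper_triangular (A * B)" using A B by auto
  have "(A * B) $$ (i, i) = A $$ (i, i) * B $$ (i, i)" if "i < n" for i
    using that entry_product_zero[of i i] by (simp add: index_mult_mat_sum[OF A(1) B(1)] sum.remove)
  then show "diag_mat (A * B) = map2 (*) (diag_mat A) (diag_mat B)"
    using A B by (auto simp: diag_mat_def intro!: nth_equalityI)
qed

lemma upper_triangular_pow:
  fixes T :: "'a::comm_semiring_1 mat"
  assumes T: "T \<in> carrier_mat n n" "upper_triangular T"
  shows "upper_triangular (T ^\<^sub>m k) \<and> diag_mat (T ^\<^sub>m k) = map (\<lambda>a. a ^ k) (diag_mat T)"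
proof (induction k)
  case 0
  show ?case using T by (auto simp: diag_mat_def intro!: nth_equalityI)
next
  case (Suc k)
  then show ?case
    using upper_triangular_mult[OF pow_carrier_mat[OF T(1)] _ T, of k]
    by (auto simp: zip_map1 zip_same_conv_map o_def mult.commute)
qed

lemma trace_pow_eq_sum_eigenvalues:
  fixes A :: "'a::conjugatable_ordered_field mat"
  assumes A: "A \<in> carrier_mat n n" and cp: "char_poly A = (\<Prod>r\<leftarrow>rs. [:- r, 1:])"
  shows "trace (A ^\<^sub>m k) = (\<Sum>r\<leftarrow>rs. r ^ k)"
proof -
  obtain T P Q where "schur_decomposition A rs = (T, P, Q)" by (metis prod_cases3)
  from schur_decomposition[OF A cp this] have sim: "similar_mat_wit A T P Q"
    and T: "upper_triangular T" "diag_mat T = rs" by auto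
  from similar_mat_witD2[OF A sim] have carr: "T \<in> carrier_mat n n" "P \<in> carrier_mat n n"
    "Q \<in> carrier_mat n n" and QP: "Q * P = 1\<^sub>m n" by auto
  have "trace (A ^\<^sub>m k) = trace (P * (T ^\<^sub>m k * Q))"
    using carr by (simp add: similar_mat_wit_pow_id[OF sim] assoc_mult_mat[of _ n n _ n _ n])
  also have "\<dots> = trace ((T ^\<^sub>m k * Q) * P)"
    using carr by (intro trace_mult_comm) auto
  also have "\<dots> = trace ((Q * P) * T ^\<^sub>m k)"
    using carr by (simp add: trace_mult_comm[of _ n n] assoc_mult_mat[of _ n n _ n _ n])
  also have "\<dots> = sum_list (diag_mat (T ^\<^sub>m k))" using carr QP by (simp add: trace_eq_sum_list_diag_mat)
  finally show ?thesis using upper_triangular_pow[OF carr(1) T(1)] T(2) by (simp add: o_def)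
qed

lemma char_poly_uminus:
  fixes A :: "'a::conjugatable_ordered_field mat"
  assumes A: "A \<in> carrier_mat n n" and cp: "char_poly A = (\<Prod>r\<leftarrow>rs. [:- r, 1:])"
  shows "char_poly (- A) = (\<Prod>r\<leftarrow>map uminus rs. [:- r, 1:])"
proof -
  obtain T P Q where "schur_decomposition A rs = (T, P, Q)" by (metis prod_cases3)
  from schur_decomposition[OF A cp this] have sim: "similar_mat_wit A T P Q"
    and T: "upper_triangular T" "diag_mat T = rs" by auto
  from similar_mat_witD2[OF A sim] have carr: "T \<in> carrier_mat n n" "P \<in> carrier_mat n n"
    "Q \<in> carrier_mat n n" and A_eq: "A = P * T * Q" by auto
  have "- A = P * (- T) * Q"
    using carr by (simp add: A_eq)
  with sim carr have "similar_mat_wit (- A) (- T) P Q"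
    unfolding similar_mat_wit_def Let_def by auto
  then have "char_poly (- A) = char_poly (- T)"
    by (intro char_poly_similar) (auto simp: similar_mat_def)
  also have "\<dots> = (\<Prod>a\<leftarrow>diag_mat (- T). [:- a, 1:])"
    using carr T by (intro char_poly_upper_triangular[of _ n]) (auto simp: upper_triangular_def)
  also have "diag_mat (- T) = map uminus rs" using T carr by (auto simp: diag_mat_def)
  finally show ?thesis .
qed

lemma char_poly_uminus_eq_if_sign_flip:
  fixes A :: "'a::comm_ring_1 mat"
  assumes A: "A \<in> carrier_mat n n" and s: "\<And>i. s i * s i = 1"
    and flip: "\<And>i j. i < n \<Longrightarrow> j < n \<Longrightarrow> s i * A $$ (i, j) * s j = - A $$ (i, j)"
  shows "char_poly (- A) = char_poly A"
proof -
  let ?S = "mat_diag n s"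
  have "- A = ?S * A * ?S"
    using A flip by (auto simp: mat_diag_mult_left[OF A] mat_diag_mult_right[of _ n n])
  moreover have "?S * ?S = 1\<^sub>m n" using s by (simp add: mat_diag_one[symmetric] del: mat_diag_one)
  ultimately have "similar_mat_wit (- A) A ?S ?S"
    using A carrier_matD[OF mat_diag_dim[of n s]] unfolding similar_mat_wit_def Let_def by auto
  then show ?thesis by (intro char_poly_similar) (auto simp: similar_mat_def)
qed

section \<open>Quadratic forms and the spectral bound\<close>

lemma scalar_prod_Cauchy_Schwarz:
  fixes x y :: "real vec"
  assumes "dim_vec x = dim_vec y"
  shows "(x \<bullet> y)\<^sup>2 \<le> (x \<bullet> x) * (y \<bullet> y)"
proof -
  let ?I = "{0..<dim_vec y}"
  have "0 \<le> (\<Sum>i\<in>?I. \<Sum>j\<in>?I. (x $ i * y $ j - x $ j * y $ i)\<^sup>2)"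
    by (intro sum_nonneg) auto
  also have "\<dots> = (\<Sum>i\<in>?I. \<Sum>j\<in>?I. (x $ i)\<^sup>2 * (y $ j)\<^sup>2)
      + (\<Sum>i\<in>?I. \<Sum>j\<in>?I. (x $ j)\<^sup>2 * (y $ i)\<^sup>2)
      - 2 * (\<Sum>i\<in>?I. \<Sum>j\<in>?I. (x $ i * y $ i) * (x $ j * y $ j))"
    by (simp add: power2_eq_square algebra_simps sum_subtractf sum.distrib sum_distrib_left)
  also have "(\<Sum>i\<in>?I. \<Sum>j\<in>?I. (x $ j)\<^sup>2 * (y $ i)\<^sup>2) = (\<Sum>i\<in>?I. \<Sum>j\<in>?I. (x $ i)\<^sup>2 * (y $ j)\<^sup>2)"
    by (rule sum.swap)
  finally show ?thesis
    using assms by (simp add: scalar_prod_def sum_product power2_eq_square)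
qed

lemma scalar_prod_self_nonneg: "0 \<le> (v :: real vec) \<bullet> v"
  by (simp add: scalar_prod_def sum_nonneg)

lemma quad_form_mult_self:
  fixes B :: "'a::comm_semiring_0 mat"
  assumes B: "B \<in> carrier_mat n n" "B\<^sup>T = B" and x: "x \<in> carrier_vec n"
  shows "x \<bullet> ((B * B) *\<^sub>v x) = (B *\<^sub>v x) \<bullet> (B *\<^sub>v x)"
  using transpose_vec_mult_scalar[OF B(1) mult_mat_vec_carrier[OF B(1) x] x] B x
  by simp

lemma mult_mat_vec_self_le_trace:
  fixes B :: "real mat"
  assumes B: "B \<in> carrier_mat m n" and x: "x \<in> carrier_vec n"
  shows "(B *\<^sub>v x) \<bullet> (B *\<^sub>v x) \<le> (x \<bullet> x) * trace (B * B\<^sup>T)"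
proof -
  have "(B *\<^sub>v x) \<bullet> (B *\<^sub>v x) = (\<Sum>i<m. (row B i \<bullet> x)\<^sup>2)"
    using B x by (simp add: scalar_prod_def lessThan_atLeast0 power2_eq_square)
  also have "\<dots> \<le> (\<Sum>i<m. (row B i \<bullet> row B i) * (x \<bullet> x))"
    using B x scalar_prod_Cauchy_Schwarz[of "row B _" x] by (intro sum_mono) simp
  also have "\<dots> = (x \<bullet> x) * trace (B * B\<^sup>T)"
    using B by (simp add: trace_def sum_distrib_left mult.commute)
  finally show ?thesis .
qed

text \<open>
  Instead of diagonalising A orthogonally, the Rayleigh bound is obtained by power iteration:
  Cauchy-Schwarz relates the form of A^c to that of A^(c 2^j), which is bounded by
  trace (A^(c 2^j)) \<le> n \<rho>^(c 2^j); the factor n disappears in the (2^j)-th root.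
\<close>

context
  fixes A :: "real mat" and n :: nat and x :: "real vec"
  assumes A: "A \<in> carrier_mat n n" and sym: "A\<^sup>T = A" and x: "x \<in> carrier_vec n"
begin

lemma quad_form_pow_add_self:
  "x \<bullet> (A ^\<^sub>m (k + k) *\<^sub>v x) = (A ^\<^sub>m k *\<^sub>v x) \<bullet> (A ^\<^sub>m k *\<^sub>v x)"
  using quad_form_mult_self[OF pow_carrier_mat[OF A] _ x] pow_mat_add[OF A] transpose_pow_mat[OF A] sym
  by simp

lemma quad_form_square_le:
  "(x \<bullet> (A ^\<^sub>m k *\<^sub>v x))\<^sup>2 \<le> (x \<bullet> x) * (x \<bullet> (A ^\<^sub>m (k + k) *\<^sub>v x))"
  using scalar_prod_Cauchy_Schwarz[of x "A ^\<^sub>m k *\<^sub>v x"] A x by (simp add: quad_form_pow_add_self)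

lemma quad_form_pow_iterate:
  "\<bar>x \<bullet> (A ^\<^sub>m c *\<^sub>v x)\<bar> ^ 2 ^ j \<le> (x \<bullet> x) ^ (2 ^ j - 1) * \<bar>x \<bullet> (A ^\<^sub>m (c * 2 ^ j) *\<^sub>v x)\<bar>"
proof (induction j)
  case (Suc j)
  let ?q = "\<lambda>k. x \<bullet> (A ^\<^sub>m k *\<^sub>v x)" and ?w = "x \<bullet> x" and ?N = "2 ^ j :: nat"
  have w: "0 \<le> ?w" by (rule scalar_prod_self_nonneg)
  have "\<bar>?q c\<bar> ^ 2 ^ Suc j = (\<bar>?q c\<bar> ^ ?N)\<^sup>2" by (simp add: power_mult[symmetric] mult.commute)
  also have "\<dots> \<le> (?w ^ (?N - 1) * \<bar>?q (c * ?N)\<bar>)\<^sup>2"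
    using Suc by (intro power_mono) auto
  also have "\<dots> = ?w ^ (2 * (?N - 1)) * (?q (c * ?N))\<^sup>2"
    by (simp add: power_mult_distrib power_mult[symmetric] mult.commute)
  also have "\<dots> \<le> ?w ^ (2 * (?N - 1)) * (?w * ?q (c * ?N + c * ?N))"
    using w quad_form_square_le by (intro mult_left_mono) auto
  also have "\<dots> = ?w ^ (2 * (?N - 1) + 1) * ?q (c * ?N + c * ?N)"
    by (simp only: power_add power_one_right mult.assoc)
  also have "\<dots> = ?w ^ (2 ^ Suc j - 1) * \<bar>?q (c * 2 ^ Suc j)\<bar>"
  proof -
    have "0 < ?N" by simp
    then have "2 * (?N - 1) + 1 = 2 ^ Suc j - 1" by (simp only: power_Suc)
    moreover have "0 \<le> ?q (c * ?N + c * ?N)"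
      by (simp only: quad_form_pow_add_self scalar_prod_self_nonneg)
    moreover have "c * 2 ^ Suc j = c * ?N + c * ?N" by simp
    ultimately show ?thesis by (metis abs_of_nonneg)
  qed
  finally show ?case .
qed simp

end

lemma le_if_power_le_const_mult_power:
  fixes a b C :: real
  assumes a: "0 \<le> a" and b: "0 \<le> b" and le: "\<And>j. a ^ 2 ^ Suc j \<le> C * b ^ 2 ^ Suc j"
  shows "a \<le> b"
proof (rule ccontr)
  assume "\<not> a \<le> b"
  then have ba: "b < a" by simp
  show False
  proof (cases "b = 0")
    case True
    then show False using le[of 0] ba by (simp add: power_mult[symmetric])
  next
    case False
    then have b_pos: "0 < b" using b by simp
    define r where "r = a / b"
    have r: "1 < r" unfolding r_def using ba b_pos by simp
    obtain k where k: "C < r ^ k" using real_arch_pow[OF r] by blast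
    let ?N = "2 ^ Suc k :: nat"
    have "k \<le> ?N" by (metis less_exp less_imp_le_nat lessI order_less_trans)
    then have "C < r ^ ?N" using k r by (meson less_le_trans power_increasing less_imp_le)
    then have "C * b ^ ?N < r ^ ?N * b ^ ?N" using b_pos by simp
    also have "\<dots> = a ^ ?N" unfolding r_def using b_pos by (simp add: power_divide)
    finally show False using le[of k] by simp
  qed
qed

lemma quad_form_abs_le_spectral_bound:
  fixes A :: "real mat"
  assumes A: "A \<in> carrier_mat n n" and sym: "A\<^sup>T = A"
    and cp: "char_poly A = (\<Prod>r\<leftarrow>rs. [:- r, 1:])"
    and \<rho>: "0 \<le> \<rho>" "\<And>r. r \<in> set rs \<Longrightarrow> \<bar>r\<bar> \<le> \<rho>" and x: "x \<in> carrier_vec n"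
  shows "\<bar>x \<bullet> (A ^\<^sub>m c *\<^sub>v x)\<bar> \<le> (x \<bullet> x) * \<rho> ^ c"
proof (rule le_if_power_le_const_mult_power)
  fix j
  let ?w = "x \<bullet> x" and ?N = "2 ^ Suc j :: nat"
  define K where "K = c * 2 ^ j"
  have w: "0 \<le> ?w" by (rule scalar_prod_self_nonneg)
  have KK: "c * ?N = K + K" unfolding K_def by simp
  have "x \<bullet> (A ^\<^sub>m (K + K) *\<^sub>v x) \<le> ?w * trace (A ^\<^sub>m K * (A ^\<^sub>m K)\<^sup>T)"
    using quad_form_pow_add_self[OF A sym x] mult_mat_vec_self_le_trace[OF pow_carrier_mat[OF A] x]
    by simp
  also have "trace (A ^\<^sub>m K * (A ^\<^sub>m K)\<^sup>T) = (\<Sum>r\<leftarrow>rs. r ^ (K + K))"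
    by (simp add: transpose_pow_mat[OF A] sym pow_mat_add[OF A, symmetric] trace_pow_eq_sum_eigenvalues[OF A cp])
  also have "\<dots> \<le> (\<Sum>r\<leftarrow>rs. \<rho> ^ (K + K))"
  proof (rule sum_list_mono)
    fix r assume "r \<in> set rs"
    then have "\<bar>r\<bar> ^ (K + K) \<le> \<rho> ^ (K + K)" using \<rho> by (intro power_mono) auto
    then show "r ^ (K + K) \<le> \<rho> ^ (K + K)" by (simp add: power_even_abs)
  qed
  finally have qKK: "x \<bullet> (A ^\<^sub>m (K + K) *\<^sub>v x) \<le> ?w * (length rs * \<rho> ^ (K + K))"
    using w by (simp add: sum_list_triv mult_left_mono)
  have "\<bar>x \<bullet> (A ^\<^sub>m c *\<^sub>v x)\<bar> ^ ?N \<le> ?w ^ (?N - 1) * \<bar>x \<bullet> (A ^\<^sub>m (K + K) *\<^sub>v x)\<bar>"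
    using quad_form_pow_iterate[OF A sym x, of c "Suc j"] by (simp only: KK)
  also have "\<dots> \<le> ?w ^ (?N - 1) * (?w * (length rs * \<rho> ^ (K + K)))"
    using qKK w quad_form_pow_add_self[OF A sym x] scalar_prod_self_nonneg
    by (intro mult_left_mono) auto
  also have "\<dots> = length rs * (?w ^ (?N - 1) * ?w) * (\<rho> ^ c) ^ ?N"
    by (simp only: KK[symmetric] power_mult mult_ac)
  also have "\<dots> = length rs * (?w * \<rho> ^ c) ^ ?N"
    using power_minus_mult[of ?N ?w] by (simp only: power_mult_distrib zero_less_power)
  finally show "\<bar>x \<bullet> (A ^\<^sub>m c *\<^sub>v x)\<bar> ^ ?N \<le> length rs * (?w * \<rho> ^ c) ^ ?N" .
qed (use \<rho> scalar_prod_self_nonneg in auto)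

lemma eigenvector_if_quad_form_extremal:
  fixes A :: "real mat"
  assumes A: "A \<in> carrier_mat n n" and sym: "A\<^sup>T = A" and x: "x \<in> carrier_vec n"
    and q1: "x \<bullet> (A *\<^sub>v x) = t * (x \<bullet> x)" and q2: "x \<bullet> (A ^\<^sub>m 2 *\<^sub>v x) \<le> t\<^sup>2 * (x \<bullet> x)"
  shows "A *\<^sub>v x = t \<cdot>\<^sub>v x"
proof -
  define y where "y = A *\<^sub>v x"
  have y: "y \<in> carrier_vec n" unfolding y_def using A x by simp
  have yy: "y \<bullet> y = x \<bullet> (A ^\<^sub>m 2 *\<^sub>v x)"
    using quad_form_pow_add_self[OF A sym x, of 1] A unfolding y_def by (simp add: numeral_2_eq_2)
  have "(\<Sum>i<n. (y $ i - t * x $ i)\<^sup>2) = y \<bullet> y - 2 * t * (x \<bullet> y) + t\<^sup>2 * (x \<bullet> x)"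
    using x y by (simp add: scalar_prod_def lessThan_atLeast0 power2_eq_square algebra_simps
        sum.distrib sum_subtractf sum_distrib_left)
  also have "\<dots> \<le> 0" using q1 q2 yy unfolding y_def by (simp add: power2_eq_square)
  finally have "(\<Sum>i<n. (y $ i - t * x $ i)\<^sup>2) = 0" by (simp add: order_antisym sum_nonneg)
  then have "y $ i = t * x $ i" if "i < n" for i using that by (simp add: sum_nonneg_eq_0_iff)
  then show ?thesis using x y unfolding y_def[symmetric] by (intro eq_vecI) auto
qed

section \<open>Multisets of roots\<close>

lemma order_prod_linear_factors:
  fixes rs :: "'a::idom list"
  shows "Polynomial.order x (\<Prod>r\<leftarrow>rs. [:- r, 1:]) = count_list rs x"
proof (induction rs)
  case (Cons r rs)
  have "[:- r, 1:] * (\<Prod>r\<leftarrow>rs. [:- r, 1:]) \<noteq> 0"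
    by (simp add: prod_list_zero_iff del: mult_pCons_left) auto
  then have "Polynomial.order x ([:- r, 1:] * (\<Prod>r\<leftarrow>rs. [:- r, 1:]))
      = Polynomial.order x [:- r, 1:] + count_list rs x"
    using Cons order_mult by metis
  then show ?case by (simp add: order_linear' del: mult_pCons_left)
qed (simp add: order_0I)

lemma sum_list_map_eq_sum_count_list:
  fixes f :: "'a \<Rightarrow> 'b::comm_semiring_1"
  assumes "finite S" "set xs \<subseteq> S"
  shows "(\<Sum>x\<leftarrow>xs. f x) = (\<Sum>x\<in>S. of_nat (count_list xs x) * f x)"
  using assms(2)
proof (induction xs)
  case (Cons a xs)
  have "(\<Sum>x\<in>S. of_nat (count_list (a # xs) x) * f x)
      = (\<Sum>x\<in>S. of_nat (count_list xs x) * f x + (if a = x then f x else 0))"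
    by (intro sum.cong refl) (simp add: distrib_right add.commute)
  also have "\<dots> = (\<Sum>x\<in>S. of_nat (count_list xs x) * f x) + f a"
    using assms(1) Cons.prems by (simp add: sum.distrib)
  finally show ?case using Cons by (simp add: add.commute)
qed simp

lemma sum_list_map_eq_if_mset_eq:
  fixes f :: "'a \<Rightarrow> 'b::comm_monoid_add"
  assumes "mset xs = mset ys"
  shows "(\<Sum>x\<leftarrow>xs. f x) = (\<Sum>x\<leftarrow>ys. f x)"
proof -
  have "mset (map f xs) = mset (map f ys)" using assms by simp
  then show ?thesis by (metis sum_mset_sum_list)
qed

lemma sum_roots_order_prod_linear_factors:
  fixes rs :: "real list" and f :: "real \<Rightarrow> real"
  defines "p \<equiv> \<Prod>r\<leftarrow>rs. [:- r, 1:]"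
  shows "(\<Sum>x\<in>{x. poly p x = 0}. of_nat (Polynomial.order x p) * f x) = (\<Sum>r\<leftarrow>rs. f r)"
proof -
  have "{x. poly p x = 0} = set rs"
    unfolding p_def by (auto simp: poly_prod_list_zero_iff)
  then show ?thesis
    by (simp add: sum_list_map_eq_sum_count_list[of "set rs"] p_def order_prod_linear_factors)
qed

lemma mset_uminus_eq_if_char_poly_uminus_eq:
  fixes A :: "'a::conjugatable_ordered_field mat"
  assumes A: "A \<in> carrier_mat n n" and cp: "char_poly A = (\<Prod>r\<leftarrow>rs. [:- r, 1:])"
    and neg: "char_poly (- A) = char_poly A"
  shows "mset (map uminus rs) = mset rs"
proof -
  have "(\<Prod>r\<leftarrow>map uminus rs. [:- r, 1:]) = (\<Prod>r\<leftarrow>rs. [:- r, 1:])"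
    using char_poly_uminus[OF A cp] neg cp by simp
  then have "count_list (map uminus rs) x = count_list rs x" for x
    by (metis order_prod_linear_factors)
  then show ?thesis by (intro multiset_eqI) (simp only: count_mset)
qed

lemma obtain_max_abs_nonzero:
  fixes rs :: "real list"
  assumes "(\<Sum>r\<leftarrow>rs. r\<^sup>2) \<noteq> 0"
  obtains l where "l \<in> set rs" "l \<noteq> 0" "\<And>r. r \<in> set rs \<Longrightarrow> \<bar>r\<bar> \<le> \<bar>l\<bar>"
proof -
  have "rs \<noteq> []" using assms by auto
  then have "Max (abs ` set rs) \<in> abs ` set rs" by (intro Max_in) auto
  then obtain l where l: "l \<in> set rs" "\<bar>l\<bar> = Max (abs ` set rs)" by auto
  have l_max: "\<bar>r\<bar> \<le> \<bar>l\<bar>" if "r \<in> set rs" for r unfolding l(2) using that by simp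
  have "l \<noteq> 0"
  proof
    assume "l = 0"
    then have "\<forall>r\<in>set rs. r = 0" using l_max by simp
    then have "(\<Sum>r\<leftarrow>rs. r\<^sup>2) = 0" by (induction rs) auto
    then show False using assms by simp
  qed
  then show thesis using that l(1) l_max by blast
qed

lemma mset_split_opposite_pair:
  fixes rs :: "'a::linordered_ab_group_add list"
  assumes sym: "mset (map uminus rs) = mset rs" and l: "l \<in> set rs" "l \<noteq> 0"
  obtains ys where "mset rs = mset (l # - l # ys)"
proof -
  have "- l \<in># mset rs" using sym l(1) by (metis image_eqI list.set_map set_mset_mset)
  moreover have "- l \<noteq> l" using l(2) by (metis neg_equal_zero)
  ultimately have "- l \<in># mset rs - {#l#}" by (simp add: in_diff_count)
  then have "mset rs = add_mset l (add_mset (- l) (mset rs - {#l#} - {#- l#}))"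
    using l(1) by (metis insert_DiffM set_mset_mset)
  moreover obtain ys where "mset ys = mset rs - {#l#} - {#- l#}" using ex_mset by blast
  ultimately show thesis using that[of ys] by simp
qed

lemma sum_list_exp_eq_sum_list_cosh:
  fixes rs :: "real list"
  assumes "mset (map uminus rs) = mset rs"
  shows "(\<Sum>r\<leftarrow>rs. exp r) = (\<Sum>r\<leftarrow>rs. cosh r)"
proof -
  have "(\<Sum>r\<leftarrow>rs. exp (- r)) = (\<Sum>r\<leftarrow>rs. exp r)"
    using sum_list_map_eq_if_mset_eq[OF assms, of exp] by (simp add: o_def)
  moreover have "(\<Sum>r\<leftarrow>rs. cosh r) = ((\<Sum>r\<leftarrow>rs. exp r) + (\<Sum>r\<leftarrow>rs. exp (- r))) / 2"
    by (induction rs) (simp_all add: cosh_def field_simps)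
  ultimately show ?thesis by simp
qed

section \<open>Adjacency matrices\<close>

lemma adj_matrix_dim [simp]: "dim_row (adj_matrix n E) = n" "dim_col (adj_matrix n E) = n"
  unfolding adj_matrix_def by simp_all

lemma adj_matrix_carrier [simp]: "adj_matrix n E \<in> carrier_mat n n"
  by (simp add: carrier_matI)

lemma index_adj_matrix [simp]:
  "i < n \<Longrightarrow> j < n \<Longrightarrow> adj_matrix n E $$ (i, j) = (if E i j then 1 else 0)"
  unfolding adj_matrix_def by simp

lemma adj_matrix_symmetric:
  assumes "simple_graph n E"
  shows "(adj_matrix n E)\<^sup>T = adj_matrix n E"
  using assms unfolding simple_graph_def by (intro eq_matI) auto

lemma char_poly_uminus_adj_matrix:
  assumes "bipartite n E"
  shows "char_poly (- adj_matrix n E) = char_poly (adj_matrix n E)"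
proof -
  from assms obtain X where X: "\<And>i j. E i j \<Longrightarrow> i \<in> X \<longleftrightarrow> j \<notin> X"
    unfolding bipartite_def by blast
  show ?thesis
    by (rule char_poly_uminus_eq_if_sign_flip[OF adj_matrix_carrier, where s = "\<lambda>i. if i \<in> X then 1 else - 1"])
      (use X in auto)
qed

lemma degree_eq_sum_adj_matrix:
  assumes "i < n"
  shows "real (degree n E i) = (\<Sum>j<n. adj_matrix n E $$ (i, j))"
proof -
  have "{j. j < n \<and> E i j} = {j \<in> {..<n}. E i j}" by auto
  then show ?thesis
    using assms by (simp add: degree_def sum.If_cases Int_def conj_commute)
qed

lemma sum_degree_eq_twice_num_edges:
  assumes "simple_graph n E"
  shows "(\<Sum>i<n. degree n E i) = 2 * num_edges n E"
proof -
  let ?L = "{(i, j). i < j \<and> j < n \<and> E i j}" and ?U = "{(i, j). j < i \<and> i < n \<and> E i j}"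
  have "(\<Sum>i<n. degree n E i) = card (SIGMA i:{..<n}. {j. j < n \<and> E i j})"
    unfolding degree_def by (simp add: card_SigmaI)
  also have "(SIGMA i:{..<n}. {j. j < n \<and> E i j}) = ?L \<union> ?U"
    using assms unfolding simple_graph_def by (auto simp: neq_iff)
  also have "card (?L \<union> ?U) = card ?L + card ?U"
    by (rule card_Un_disjoint) (auto intro: finite_subset[of _ "{..<n} \<times> {..<n}"])
  also have "?U = (\<lambda>(i, j). (j, i)) ` ?L" using assms unfolding simple_graph_def by auto
  also have "card \<dots> = card ?L" by (rule card_image) (auto simp: inj_on_def)
  finally show ?thesis unfolding num_edges_def by simp
qed

lemma trace_adj_matrix_square:
  assumes "simple_graph n E"
  shows "trace (adj_matrix n E ^\<^sub>m 2) = 2 * real (num_edges n E)"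
proof -
  let ?A = "adj_matrix n E"
  have "trace (?A ^\<^sub>m 2) = (\<Sum>i<n. (?A * ?A) $$ (i, i))"
    by (simp add: trace_def numeral_2_eq_2)
  also have "\<dots> = (\<Sum>i<n. \<Sum>l<n. ?A $$ (i, l) * ?A $$ (l, i))"
    by (intro sum.cong refl index_mult_mat_sum) auto
  also have "\<dots> = (\<Sum>i<n. real (degree n E i))"
    using assms unfolding simple_graph_def
    by (intro sum.cong refl) (auto simp: degree_eq_sum_adj_matrix intro!: sum.cong)
  also have "\<dots> = 2 * real (num_edges n E)"
    using sum_degree_eq_twice_num_edges[OF assms] by (metis of_nat_mult of_nat_numeral of_nat_sum)
  finally show ?thesis .
qed

lemma min_degree_attained:
  assumes "0 < n"
  obtains v where "v < n" "degree n E v = min_degree n E"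
proof -
  have "min_degree n E \<in> degree n E ` {0..<n}"
    unfolding min_degree_def using assms by (intro Min_in) auto
  then show thesis using that by auto
qed

lemma min_degree_le: "i < n \<Longrightarrow> min_degree n E \<le> degree n E i"
  unfolding min_degree_def by (intro Min_le) auto

definition ones_except :: "nat \<Rightarrow> nat \<Rightarrow> real vec" where
  "ones_except n v = vec n (\<lambda>i. if i = v then 0 else 1)"

lemma ones_except_carrier [simp]: "ones_except n v \<in> carrier_vec n"
  unfolding ones_except_def by simp

lemma scalar_prod_ones_except:
  assumes "v < n" "dim_vec w = n"
  shows "w \<bullet> ones_except n v = (\<Sum>j<n. w $ j) - w $ v"
proof -
  have "w \<bullet> ones_except n v = (\<Sum>j<n. w $ j - (if j = v then w $ j else 0))"
    using assms by (auto simp: scalar_prod_def ones_except_def lessThan_atLeast0 intro!: sum.cong)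
  also have "\<dots> = (\<Sum>j<n. w $ j) - w $ v" using assms by (simp add: sum_subtractf)
  finally show ?thesis .
qed

lemma ones_except_self:
  assumes "v < n"
  shows "ones_except n v \<bullet> ones_except n v = real n - 1"
proof -
  have "ones_except n v \<bullet> ones_except n v = (\<Sum>j<n. 1 - (if j = v then 1 else 0))"
    using scalar_prod_ones_except[OF assms, of "ones_except n v"] assms
    by (simp add: ones_except_def if_distrib cong: if_cong)
  then show ?thesis using assms by (simp add: sum_subtractf)
qed

lemma adj_matrix_mult_ones_except:
  assumes "v < n" "i < n"
  shows "(adj_matrix n E *\<^sub>v ones_except n v) $ i = real (degree n E i) - adj_matrix n E $$ (i, v)"
  using assms scalar_prod_ones_except[OF assms(1), of "row (adj_matrix n E) i"]
  by (simp add: degree_eq_sum_adj_matrix)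

lemma quad_form_ones_except:
  assumes G: "simple_graph n E" and v: "v < n"
  shows "ones_except n v \<bullet> (adj_matrix n E *\<^sub>v ones_except n v)
    = 2 * real (num_edges n E) - 2 * real (degree n E v)"
proof -
  let ?A = "adj_matrix n E" and ?x = "ones_except n v"
  have Ax: "?A *\<^sub>v ?x \<in> carrier_vec n" by (simp add: carrier_vecI)
  have A_sym: "?A $$ (i, v) = ?A $$ (v, i)" if "i < n" for i
    using G v that unfolding simple_graph_def by auto
  have "?x \<bullet> (?A *\<^sub>v ?x) = (\<Sum>i<n. (?A *\<^sub>v ?x) $ i) - (?A *\<^sub>v ?x) $ v"
    using comm_scalar_prod[OF _ Ax] scalar_prod_ones_except[OF v] by simp
  also have "\<dots> = (\<Sum>i<n. real (degree n E i) - ?A $$ (i, v)) - (real (degree n E v) - ?A $$ (v, v))"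
    using v by (simp add: adj_matrix_mult_ones_except del: index_mult_mat_vec)
  also have "(\<Sum>i<n. real (degree n E i) - ?A $$ (i, v)) = real (\<Sum>i<n. degree n E i) - real (degree n E v)"
    using v by (simp add: sum_subtractf A_sym degree_eq_sum_adj_matrix del: index_adj_matrix)
  also have "?A $$ (v, v) = 0" using G v unfolding simple_graph_def by auto
  finally show ?thesis by (simp add: sum_degree_eq_twice_num_edges[OF G])
qed

lemma quad_form_ones_except_min_degree:
  assumes G: "simple_graph n E" and n: "2 \<le> n" and v: "v < n" "degree n E v = min_degree n E"
  shows "ones_except n v \<bullet> (adj_matrix n E *\<^sub>v ones_except n v)
    = 2 * (real (num_edges n E) - real (min_degree n E)) / (real n - 1) * (ones_except n v \<bullet> ones_except n v)"
  using quad_form_ones_except[OF G v(1)] ones_except_self[OF v(1)] v(2) n by simp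

lemma degrees_if_ones_except_eigenvector:
  assumes G: "simple_graph n E" and v: "v < n"
    and eig: "adj_matrix n E *\<^sub>v ones_except n v = t \<cdot>\<^sub>v ones_except n v"
  shows "degree n E v = 0" "\<And>i. i < n \<Longrightarrow> i \<noteq> v \<Longrightarrow> real (degree n E i) = t"
proof -
  have entry: "real (degree n E i) - adj_matrix n E $$ (i, v) = t * (if i = v then 0 else 1)" if "i < n" for i
    using arg_cong[OF eig, of "\<lambda>w. w $ i"] adj_matrix_mult_ones_except[OF v that] that
    by (simp add: ones_except_def)
  have "\<not> E v v" using G unfolding simple_graph_def by blast
  then show deg_v: "degree n E v = 0" using entry[OF v] v by simp
  have "\<not> E i v" for i
  proof
    assume "E i v"
    then have "i \<in> {j. j < n \<and> E v j}" using G unfolding simple_graph_def by blast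
    then show False using deg_v unfolding degree_def by (auto simp: card_eq_0_iff)
  qed
  then show "real (degree n E i) = t" if "i < n" "i \<noteq> v" for i using entry[of i] that v by simp
qed

section \<open>The graphs K_{p,p} \<union> K_1\<close>

lemma degree_Kpp_K1:
  assumes "k < 2 * p + 1"
  shows "degree (2 * p + 1) (Kpp_K1 p) k = (if k < 2 * p then p else 0)"
proof -
  consider "k < p" | "p \<le> k" "k < 2 * p" | "k = 2 * p" using assms by linarith
  then show ?thesis
  proof cases
    case 1
    then have "{j. j < 2 * p + 1 \<and> Kpp_K1 p k j} = {p..<2 * p}" unfolding Kpp_K1_def by auto
    then show ?thesis using 1 unfolding degree_def by simp
  next
    case 2
    then have "{j. j < 2 * p + 1 \<and> Kpp_K1 p k j} = {0..<p}" unfolding Kpp_K1_def by auto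
    then show ?thesis using 2 unfolding degree_def by simp
  qed (simp add: degree_def Kpp_K1_def)
qed

lemma degree_graph_iso:
  assumes f: "bij_betw f {0..<n} {0..<n'}" and E: "\<And>i j. i < n \<Longrightarrow> j < n \<Longrightarrow> E i j \<longleftrightarrow> E' (f i) (f j)"
    and i: "i < n"
  shows "degree n E i = degree n' E' (f i)"
proof -
  have "{j'. j' < n' \<and> E' (f i) j'} = f ` {j. j < n \<and> E i j}"
  proof -
    have "{j'. j' < n' \<and> E' (f i) j'} = {j' \<in> f ` {0..<n}. E' (f i) j'}"
      using bij_betw_imp_surj_on[OF f] by auto
    also have "\<dots> = f ` {j. j < n \<and> E i j}" using E[OF i] by auto
    finally show ?thesis .
  qed
  moreover have "inj_on f {j. j < n \<and> E i j}"
    using bij_betw_imp_inj_on[OF f] by (rule inj_on_subset) auto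
  ultimately show ?thesis unfolding degree_def by (simp add: card_image)
qed

lemma graph_iso_Kpp_K1_invariants:
  assumes G: "simple_graph n E" and iso: "graph_iso n E (2 * p + 1) (Kpp_K1 p)" and n: "n = 2 * p + 1"
  shows "min_degree n E = 0" "num_edges n E = p * p"
proof -
  from iso obtain f where f: "bij_betw f {0..<n} {0..<2 * p + 1}"
    and E: "\<And>i j. i < n \<Longrightarrow> j < n \<Longrightarrow> E i j \<longleftrightarrow> Kpp_K1 p (f i) (f j)"
    unfolding graph_iso_def by blast
  note deg = degree_graph_iso[where E = E and E' = "Kpp_K1 p", OF f E]
  have "2 * num_edges n E = (\<Sum>i\<in>{0..<n}. degree (2 * p + 1) (Kpp_K1 p) (f i))"
    by (simp add: sum_degree_eq_twice_num_edges[OF G, symmetric] deg lessThan_atLeast0)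
  also have "\<dots> = (\<Sum>k\<in>{0..<2 * p + 1}. degree (2 * p + 1) (Kpp_K1 p) k)"
    by (rule sum.reindex_bij_betw[OF f])
  also have "\<dots> = (\<Sum>k\<in>{0..<2 * p}. degree (2 * p + 1) (Kpp_K1 p) k) + degree (2 * p + 1) (Kpp_K1 p) (2 * p)"
    using sum.atLeast0_lessThan_Suc[of _ "2 * p"] by simp
  also have "\<dots> = (\<Sum>k\<in>{0..<2 * p}. p)"
  proof -
    have "(\<Sum>k\<in>{0..<2 * p}. degree (2 * p + 1) (Kpp_K1 p) k) = (\<Sum>k\<in>{0..<2 * p}. p)"
      using degree_Kpp_K1[of _ p] by (intro sum.cong) auto
    moreover have "degree (2 * p + 1) (Kpp_K1 p) (2 * p) = 0" using degree_Kpp_K1[of "2 * p" p] by simp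
    ultimately show ?thesis by simp
  qed
  finally show "num_edges n E = p * p" by simp
  have "2 * p \<in> f ` {0..<n}" using bij_betw_imp_surj_on[OF f] by simp
  then obtain v where v: "v < n" "f v = 2 * p" by auto
  then have "degree n E v = 0" using deg degree_Kpp_K1[of "2 * p" p] by simp
  then show "min_degree n E = 0" using min_degree_le[OF v(1), of E] by simp
qed

lemma graph_iso_Kpp_K1I:
  assumes XY: "X \<inter> Y = {}" "v \<notin> X \<union> Y" "X \<union> Y \<union> {v} = {0..<n}"
    and card: "card X = p" "card Y = p"
    and E: "\<And>i j. i < n \<Longrightarrow> j < n \<Longrightarrow> E i j \<longleftrightarrow> (i \<in> X \<and> j \<in> Y) \<or> (i \<in> Y \<and> j \<in> X)"
  shows "graph_iso n E (2 * p + 1) (Kpp_K1 p)"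
proof -
  have fin: "finite X" "finite Y" using XY(3) by (metis finite_Un finite_atLeastLessThan)+
  obtain gX where gX: "bij_betw gX X {0..<p}" using finite_same_card_bij[OF fin(1), of "{0..<p}"] card by auto
  obtain gY where gY: "bij_betw gY Y {p..<2 * p}" using finite_same_card_bij[OF fin(2), of "{p..<2 * p}"] card by auto
  define f where "f i = (if i \<in> X then gX i else if i \<in> Y then gY i else 2 * p)" for i
  have fX: "bij_betw f X {0..<p}" using gX by (rule bij_betw_cong[THEN iffD1, rotated]) (simp add: f_def)
  have fY: "bij_betw f Y {p..<2 * p}"
    using gY by (rule bij_betw_cong[THEN iffD1, rotated]) (use XY(1) in \<open>auto simp: f_def\<close>)
  have fv: "bij_betw f {v} {2 * p}" using XY(2) by (simp add: f_def bij_betw_def)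
  have "bij_betw f (X \<union> Y \<union> {v}) ({0..<p} \<union> {p..<2 * p} \<union> {2 * p})"
    using fX fY fv XY(1,2) by (intro bij_betw_combine) auto
  moreover have "{0..<p} \<union> {p..<2 * p} \<union> {2 * p} = {0..<2 * p + 1}" by auto
  ultimately have f: "bij_betw f {0..<n} {0..<2 * p + 1}" using XY(3) by simp
  have part: "(f i < p \<longleftrightarrow> i \<in> X) \<and> (p \<le> f i \<and> f i < 2 * p \<longleftrightarrow> i \<in> Y)" for i
    using bij_betwE[OF gX] bij_betwE[OF gY] XY(1) by (auto simp: f_def)
  show ?thesis unfolding graph_iso_def
  proof (intro exI conjI allI impI)
    fix i j assume "i < n" "j < n"
    then show "E i j \<longleftrightarrow> Kpp_K1 p (f i) (f j)"
      unfolding E[OF \<open>i < n\<close> \<open>j < n\<close>] Kpp_K1_def using part[of i] part[of j] by blast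
  qed (rule f)
qed

lemma card_sides_eq_if_biregular:
  fixes N :: "'a \<Rightarrow> 'a set"
  assumes fin: "finite X" "finite Y"
    and N: "\<And>i. i \<in> X \<Longrightarrow> N i \<subseteq> Y" "\<And>i. i \<in> Y \<Longrightarrow> N i \<subseteq> X"
    and deg: "\<And>i. i \<in> X \<union> Y \<Longrightarrow> card (N i) = p" and sum: "card X + card Y = 2 * p"
  shows "card X = p" "card Y = p"
proof -
  have "p \<le> card Y" if "i \<in> X" for i
    using card_mono[OF fin(2) N(1)[OF that]] deg[of i] that by simp
  moreover have "p \<le> card X" if "i \<in> Y" for i
    using card_mono[OF fin(1) N(2)[OF that]] deg[of i] that by simp
  ultimately have "p \<le> card X" "p \<le> card Y"
    using sum fin by (cases "X = {}"; cases "Y = {}"; force)+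
  then show "card X = p" "card Y = p" using sum by linarith+
qed

lemma graph_iso_Kpp_K1_if_regular_but_isolated:
  assumes G: "simple_graph n E" and bip: "bipartite n E" and n: "n = 2 * p + 1"
    and v: "v < n" "degree n E v = 0" and deg: "\<And>i. i < n \<Longrightarrow> i \<noteq> v \<Longrightarrow> degree n E i = p"
  shows "graph_iso n E (2 * p + 1) (Kpp_K1 p)"
proof -
  from bip obtain X where X: "\<And>i j. E i j \<Longrightarrow> i \<in> X \<longleftrightarrow> j \<notin> X" unfolding bipartite_def by blast
  define X' where "X' = {i. i < n \<and> i \<noteq> v \<and> i \<in> X}"
  define Y' where "Y' = {i. i < n \<and> i \<noteq> v \<and> i \<notin> X}"
  let ?N = "\<lambda>i. {j. j < n \<and> E i j}"
  have fin: "finite X'" "finite Y'" unfolding X'_def Y'_def by auto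
  have XY: "X' \<inter> Y' = {}" "v \<notin> X' \<union> Y'" "X' \<union> Y' = {0..<n} - {v}" "X' \<union> Y' \<union> {v} = {0..<n}"
    unfolding X'_def Y'_def using v by auto
  have Nv: "?N v = {}" using v by (auto simp: degree_def)
  then have N: "?N i \<subseteq> (if i \<in> X then Y' else X')" if "i < n" for i
    using G X that unfolding simple_graph_def X'_def Y'_def by auto
  have degN: "card (?N i) = p" if "i \<in> X' \<union> Y'" for i
    using deg that unfolding degree_def X'_def Y'_def by auto
  have sum: "card X' + card Y' = 2 * p"
    using card_Un_disjoint[OF fin XY(1)] XY(3) v n by (simp add: card_Diff_singleton)
  have "?N i \<subseteq> Y'" if "i \<in> X'" for i using N[of i] that unfolding X'_def by simp
  moreover have "?N i \<subseteq> X'" if "i \<in> Y'" for i using N[of i] that unfolding Y'_def by simp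
  ultimately have card: "card X' = p" "card Y' = p"
    using card_sides_eq_if_biregular[where N = ?N, OF fin _ _ degN sum] by blast+
  have N_eq: "?N i = (if i \<in> X then Y' else X')" if i: "i \<in> X' \<union> Y'" for i
  proof (rule card_subset_eq)
    show "?N i \<subseteq> (if i \<in> X then Y' else X')" using N i unfolding X'_def Y'_def by blast
    show "card (?N i) = card (if i \<in> X then Y' else X')" using degN[OF i] card by simp
  qed (use fin in simp)
  show ?thesis
  proof (rule graph_iso_Kpp_K1I[OF XY(1,2,4) card])
    fix i j assume ij: "i < n" "j < n"
    show "E i j \<longleftrightarrow> (i \<in> X' \<and> j \<in> Y') \<or> (i \<in> Y' \<and> j \<in> X')"
    proof (cases "i = v")
      case True
      then show ?thesis using Nv ij XY(2) by auto
    next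
      case False
      then have "i \<in> X' \<longleftrightarrow> i \<in> X" "i \<in> Y' \<longleftrightarrow> i \<notin> X" "i \<in> X' \<union> Y'"
        using ij unfolding X'_def Y'_def by auto
      moreover have "E i j \<longleftrightarrow> j \<in> ?N i" using ij by simp
      ultimately show ?thesis using N_eq[of i] by auto
    qed
  qed
qed

section \<open>Bipartite graphs of extremal Estrada index\<close>

lemma two_cosh_add_sum_list_cosh_ge:
  fixes t \<rho> :: real and ys :: "real list"
  assumes t: "\<bar>t\<bar> \<le> \<rho>"
  shows "2 * cosh t + length ys \<le> 2 * cosh \<rho> + (\<Sum>y\<leftarrow>ys. cosh y)"
    and "2 * cosh t + length ys = 2 * cosh \<rho> + (\<Sum>y\<leftarrow>ys. cosh y) \<longleftrightarrow> \<rho> = \<bar>t\<bar> \<and> (\<forall>y\<in>set ys. y = 0)"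
proof -
  have cosh_le: "cosh t \<le> cosh \<rho>" and cosh_eq: "cosh t = cosh \<rho> \<longleftrightarrow> \<rho> = \<bar>t\<bar>"
    using t cosh_real_nonneg_le_iff[of "\<bar>t\<bar>" \<rho>] cosh_real_nonneg_le_iff[of \<rho> "\<bar>t\<bar>"]
    by (auto simp: cosh_real_abs)
  have "(\<Sum>y\<leftarrow>ys. cosh y) - length ys = (\<Sum>y\<leftarrow>ys. cosh y - 1)"
    by (induction ys) auto
  moreover have "0 \<le> (\<Sum>y\<leftarrow>ys. cosh y - 1)" by (intro sum_list_nonneg) (auto simp: cosh_real_ge_1)
  moreover have "(\<Sum>y\<leftarrow>ys. cosh y - 1) = 0 \<longleftrightarrow> (\<forall>y\<in>set ys. y = 0)"
    by (subst sum_list_nonneg_eq_0_iff) (auto simp: cosh_real_ge_1 cosh_real_one_iff)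
  ultimately show "2 * cosh t + length ys \<le> 2 * cosh \<rho> + (\<Sum>y\<leftarrow>ys. cosh y)"
    and "2 * cosh t + length ys = 2 * cosh \<rho> + (\<Sum>y\<leftarrow>ys. cosh y) \<longleftrightarrow> \<rho> = \<bar>t\<bar> \<and> (\<forall>y\<in>set ys. y = 0)"
    using cosh_le cosh_eq by linarith+
qed

lemma abs_eq_and_zeros_if_sum_squares_eq:
  fixes t \<rho> :: real and ys :: "real list"
  assumes t: "\<bar>t\<bar> \<le> \<rho>" and sq: "2 * \<rho>\<^sup>2 + (\<Sum>y\<leftarrow>ys. y\<^sup>2) = 2 * t\<^sup>2"
  shows "\<rho> = \<bar>t\<bar> \<and> (\<forall>y\<in>set ys. y = 0)"
proof -
  have "\<bar>t\<bar>\<^sup>2 \<le> \<rho>\<^sup>2" using t by (intro power_mono) auto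
  moreover have "0 \<le> (\<Sum>y\<leftarrow>ys. y\<^sup>2)" by (intro sum_list_nonneg) auto
  ultimately have "\<rho>\<^sup>2 = \<bar>t\<bar>\<^sup>2" "(\<Sum>y\<leftarrow>ys. y\<^sup>2) = 0" using sq by simp_all
  moreover have "0 \<le> \<rho>" using t by linarith
  ultimately show ?thesis
    by (subst (asm) power2_eq_iff_nonneg, simp_all) (subst (asm) sum_list_nonneg_eq_0_iff, auto)
qed

lemma bipartite_spectrum_decomposition:
  assumes G: "simple_graph n E" and bip: "bipartite n E" and m: "1 \<le> num_edges n E"
  obtains \<rho> ys where "length ys + 2 = n"
    "estrada_index n E = 2 * cosh \<rho> + (\<Sum>y\<leftarrow>ys. cosh y)"
    "2 * \<rho>\<^sup>2 + (\<Sum>y\<leftarrow>ys. y\<^sup>2) = 2 * real (num_edges n E)"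
    "\<And>x c. x \<in> carrier_vec n \<Longrightarrow> \<bar>x \<bullet> (adj_matrix n E ^\<^sub>m c *\<^sub>v x)\<bar> \<le> (x \<bullet> x) * \<rho> ^ c"
proof -
  let ?A = "adj_matrix n E"
  note sym = adj_matrix_symmetric[OF G]
  obtain rs where cp: "char_poly ?A = (\<Prod>r\<leftarrow>rs. [:- r, 1:])" and len: "length rs = n"
    using real_symmetric_char_poly_splits[OF adj_matrix_carrier sym] by blast
  have rs_sym: "mset (map uminus rs) = mset rs"
    by (rule mset_uminus_eq_if_char_poly_uminus_eq[OF adj_matrix_carrier cp char_poly_uminus_adj_matrix[OF bip]])
  have squares: "(\<Sum>r\<leftarrow>rs. r\<^sup>2) = 2 * real (num_edges n E)"
    using trace_pow_eq_sum_eigenvalues[OF adj_matrix_carrier cp, of 2] trace_adj_matrix_square[OF G] by simp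
  obtain l where l: "l \<in> set rs" "l \<noteq> 0" and l_max: "\<And>r. r \<in> set rs \<Longrightarrow> \<bar>r\<bar> \<le> \<bar>l\<bar>"
    using obtain_max_abs_nonzero[of rs] squares m by auto
  define \<rho> where "\<rho> = \<bar>l\<bar>"
  obtain ys where ys: "mset rs = mset (l # - l # ys)" using mset_split_opposite_pair[OF rs_sym l] by blast
  note sum_ys = sum_list_map_eq_if_mset_eq[OF ys]
  show thesis
  proof
    show "length ys + 2 = n" using mset_eq_length[OF ys] len by simp
    have "estrada_index n E = (\<Sum>r\<leftarrow>rs. exp r)"
      unfolding estrada_index_def Let_def cp by (rule sum_roots_order_prod_linear_factors)
    also have "\<dots> = (\<Sum>r\<leftarrow>rs. cosh r)" by (rule sum_list_exp_eq_sum_list_cosh[OF rs_sym])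
    also have "\<dots> = 2 * cosh \<rho> + (\<Sum>y\<leftarrow>ys. cosh y)"
      using sum_ys[of cosh] unfolding \<rho>_def by (simp add: cosh_minus cosh_real_abs)
    finally show "estrada_index n E = 2 * cosh \<rho> + (\<Sum>y\<leftarrow>ys. cosh y)" .
    show "2 * \<rho>\<^sup>2 + (\<Sum>y\<leftarrow>ys. y\<^sup>2) = 2 * real (num_edges n E)"
      using squares sum_ys[of "\<lambda>r. r\<^sup>2"] unfolding \<rho>_def by simp
    show "\<bar>x \<bullet> (?A ^\<^sub>m c *\<^sub>v x)\<bar> \<le> (x \<bullet> x) * \<rho> ^ c" if "x \<in> carrier_vec n" for x c
      using quad_form_abs_le_spectral_bound[OF adj_matrix_carrier sym cp _ l_max that] unfolding \<rho>_def by auto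
  qed
qed

lemma graph_iso_Kpp_K1_if_extremal:
  fixes t :: real
  assumes G: "simple_graph n E" and bip: "bipartite n E" and n: "2 \<le> n" and m: "1 \<le> num_edges n E"
    and t: "t = 2 * (real (num_edges n E) - real (min_degree n E)) / (real n - 1)"
    and bound: "\<And>x c. x \<in> carrier_vec n \<Longrightarrow> \<bar>x \<bullet> (adj_matrix n E ^\<^sub>m c *\<^sub>v x)\<bar> \<le> (x \<bullet> x) * \<bar>t\<bar> ^ c"
    and m_eq: "real (num_edges n E) = t\<^sup>2"
  shows "\<exists>p. n = 2 * p + 1 \<and> graph_iso n E (2 * p + 1) (Kpp_K1 p)"
proof -
  let ?A = "adj_matrix n E"
  obtain v where v: "v < n" "degree n E v = min_degree n E"
    using min_degree_attained[of n E] n by auto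
  let ?x = "ones_except n v"
  have "?x \<bullet> (?A ^\<^sub>m 2 *\<^sub>v ?x) \<le> t\<^sup>2 * (?x \<bullet> ?x)"
    using bound[of ?x 2] by (simp add: mult.commute)
  then have "?A *\<^sub>v ?x = t \<cdot>\<^sub>v ?x"
    using quad_form_ones_except_min_degree[OF G n v] t
    by (intro eigenvector_if_quad_form_extremal[OF adj_matrix_carrier adj_matrix_symmetric[OF G]]) simp_all
  note deg = degrees_if_ones_except_eigenvector[OF G v(1) this]
  have "t * (real n - 1) = 2 * t\<^sup>2" using t n m_eq deg(1) v(2) by (simp add: field_simps)
  moreover have "t \<noteq> 0" using m m_eq by auto
  ultimately have n_t: "real n = 2 * t + 1" by (simp add: power2_eq_square)
  define i0 where "i0 = (if v = 0 then 1 else 0 :: nat)"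
  have i0: "i0 < n" "i0 \<noteq> v" unfolding i0_def using n by auto
  define p where "p = degree n E i0"
  have p: "real p = t" using deg(2)[OF i0] unfolding p_def .
  have "n = 2 * p + 1" using n_t p by linarith
  moreover have "degree n E i = p" if "i < n" "i \<noteq> v" for i using deg(2)[OF that] p by simp
  ultimately show ?thesis
    using graph_iso_Kpp_K1_if_regular_but_isolated[OF G bip _ v(1) deg(1)] by blast
qed

lemma abs_edge_density_le:
  assumes G: "simple_graph n E" and n: "2 \<le> n"
    and bound: "\<And>x. x \<in> carrier_vec n \<Longrightarrow> \<bar>x \<bullet> (adj_matrix n E *\<^sub>v x)\<bar> \<le> (x \<bullet> x) * \<rho>"
  shows "\<bar>2 * (real (num_edges n E) - real (min_degree n E)) / (real n - 1)\<bar> \<le> \<rho>"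
proof -
  obtain v where v: "v < n" "degree n E v = min_degree n E"
    using min_degree_attained[of n E] n by auto
  have "\<bar>2 * (real (num_edges n E) - real (min_degree n E)) / (real n - 1)\<bar> * (real n - 1) \<le> (real n - 1) * \<rho>"
    using bound[of "ones_except n v"] quad_form_ones_except_min_degree[OF G n v] ones_except_self[OF v(1)] n
    by (simp add: abs_mult)
  moreover have "0 < real n - 1" using n by simp
  ultimately show ?thesis by (simp add: pos_divide_le_eq mult.commute)
qed

lemma spectral_extremality_iff_Kpp_K1:
  fixes t \<rho> :: real
  assumes G: "simple_graph n E" and bip: "bipartite n E" and n: "2 \<le> n" and m: "1 \<le> num_edges n E"
    and t: "t = 2 * (real (num_edges n E) - real (min_degree n E)) / (real n - 1)"
    and t_le: "\<bar>t\<bar> \<le> \<rho>" and sq: "2 * \<rho>\<^sup>2 + (\<Sum>y\<leftarrow>ys. y\<^sup>2) = 2 * real (num_edges n E)"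
    and bound: "\<And>x c. x \<in> carrier_vec n \<Longrightarrow> \<bar>x \<bullet> (adj_matrix n E ^\<^sub>m c *\<^sub>v x)\<bar> \<le> (x \<bullet> x) * \<rho> ^ c"
  shows "\<rho> = \<bar>t\<bar> \<and> (\<forall>y\<in>set ys. y = 0) \<longleftrightarrow> (\<exists>p. n = 2 * p + 1 \<and> graph_iso n E (2 * p + 1) (Kpp_K1 p))"
proof
  assume extremal: "\<rho> = \<bar>t\<bar> \<and> (\<forall>y\<in>set ys. y = 0)"
  then have "(\<Sum>y\<leftarrow>ys. y\<^sup>2) = 0" by (induction ys) auto
  then show "\<exists>p. n = 2 * p + 1 \<and> graph_iso n E (2 * p + 1) (Kpp_K1 p)"
    using extremal sq bound by (intro graph_iso_Kpp_K1_if_extremal[OF G bip n m t]) simp_all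
next
  assume "\<exists>p. n = 2 * p + 1 \<and> graph_iso n E (2 * p + 1) (Kpp_K1 p)"
  then obtain p where "n = 2 * p + 1" "min_degree n E = 0" "num_edges n E = p * p"
    using graph_iso_Kpp_K1_invariants[OF G] by blast
  then have "real (num_edges n E) = t\<^sup>2" using n by (simp add: t power2_eq_square)
  then show "\<rho> = \<bar>t\<bar> \<and> (\<forall>y\<in>set ys. y = 0)"
    using abs_eq_and_zeros_if_sum_squares_eq[OF t_le] sq by simp
qed

theorem mainTheorem12:
  fixes n :: nat and E :: "nat \<Rightarrow> nat \<Rightarrow> bool"
  assumes "simple_graph n E" and "bipartite n E"
    and "n \<ge> 2" and "num_edges n E \<ge> 1"
  shows "estrada_index n E \<ge>
           2 * cosh (2 * (real (num_edges n E) - real (min_degree n E)) / (real n - 1))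
           + (real n - 2) \<and>
         (estrada_index n E =
           2 * cosh (2 * (real (num_edges n E) - real (min_degree n E)) / (real n - 1))
           + (real n - 2)
         \<longleftrightarrow> (\<exists>p. n = 2 * p + 1 \<and> graph_iso n E (2 * p + 1) (Kpp_K1 p)))"
proof -
  note G = assms(1) and bip = assms(2) and n = assms(3) and m = assms(4)
  define t where "t = 2 * (real (num_edges n E) - real (min_degree n E)) / (real n - 1)"
  obtain \<rho> ys where len: "length ys + 2 = n"
    and EE: "estrada_index n E = 2 * cosh \<rho> + (\<Sum>y\<leftarrow>ys. cosh y)"
    and sq: "2 * \<rho>\<^sup>2 + (\<Sum>y\<leftarrow>ys. y\<^sup>2) = 2 * real (num_edges n E)"
    and bound: "\<And>x c. x \<in> carrier_vec n \<Longrightarrow> \<bar>x \<bullet> (adj_matrix n E ^\<^sub>m c *\<^sub>v x)\<bar> \<le> (x \<bullet> x) * \<rho> ^ c"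
    using bipartite_spectrum_decomposition[OF G bip m] by metis
  have t_le: "\<bar>t\<bar> \<le> \<rho>" unfolding t_def using abs_edge_density_le[OF G n] bound[of _ 1] by simp
  have "real n - 2 = length ys" using len by simp
  then show ?thesis
    using two_cosh_add_sum_list_cosh_ge[OF t_le, of ys] EE
      spectral_extremality_iff_Kpp_K1[OF G bip n m t_def t_le sq bound]
    unfolding t_def[symmetric] by metis
qed

end
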